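(* Let $l\ge2$ and $a,b\in\mathbb{Z}_{2l}$ be such that $X=X(\mathbb{Z}_{2l},\{\pm a,\pm b\})$ is a connected $4$-regular circulant graph, and assume $a+b=l$. If $l\equiv0\pmod4$, then $X$ does not admit perfect state transfer between (distinct) vertex type states.
   Context: For $S\subseteq\mathbb{Z}_n\setminus\{0\}$ with $S=-S$, $X(\mathbb{Z}_n,S)$ has vertex set $\mathbb{Z}_n$ and edges $\{x,y\}$ with $y-x\in S$. For a graph with symmetric arc set $\mathcal{A}$ ($t((x,y))=y$, $(x,y)^{-1}=(y,x)$): boundary matrix $d_{x,a}=\frac{1}{\sqrt{\deg x}}\delta_{x,t(a)}$, shift matrix $R_{a,b}=\delta_{a,b^{-1}}$, $U=R(2d^*d-I_{\mathcal{A}})$; $d^*e_x$ ($e_x$ the standard unit vector) is a vertex type state. Perfect state transfer from $\Phi$ to a distinct state $\Psi$ means $U^\tau\Phi=\gamma\Psi$ for some $\tau\in\mathbb{Z}_{\ge1}$ and $|\gamma|=1$. *)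

theory Defs
  imports Complex_Main
begin

text \<open>General graph given by a finite vertex set V and a symmetric arc set A \<subseteq> V \<times> V.
  An arc a = (x,y) has terminus t(a) = snd a = y and inverse (y,x).\<close>

definition gdeg :: "('a \<times> 'a) set \<Rightarrow> 'a \<Rightarrow> nat" where
  "gdeg A x = card {a \<in> A. snd a = x}"

definition bnd :: "('a \<times> 'a) set \<Rightarrow> 'a \<Rightarrow> ('a \<times> 'a) \<Rightarrow> complex" where
  "bnd A x a = (if x = snd a then complex_of_real (1 / sqrt (real (gdeg A x))) else 0)"

definition vstate :: "('a \<times> 'a) set \<Rightarrow> 'a \<Rightarrow> ('a \<times> 'a) \<Rightarrow> complex" where
  "vstate A x = (\<lambda>a. if a \<in> A then cnj (bnd A x a) else 0)"

text \<open>Coin operator 2 d^* d - I acting on arc vectors.\<close>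
definition coin :: "'a set \<Rightarrow> ('a \<times> 'a) set \<Rightarrow> (('a \<times> 'a) \<Rightarrow> complex) \<Rightarrow> ('a \<times> 'a) \<Rightarrow> complex" where
  "coin V A \<phi> = (\<lambda>a. if a \<in> A then
      2 * (\<Sum>b\<in>A. (\<Sum>x\<in>V. cnj (bnd A x a) * bnd A x b) * \<phi> b) - \<phi> a else 0)"

definition shift :: "('a \<times> 'a) set \<Rightarrow> (('a \<times> 'a) \<Rightarrow> complex) \<Rightarrow> ('a \<times> 'a) \<Rightarrow> complex" where
  "shift A \<psi> = (\<lambda>a. if a \<in> A then \<psi> (snd a, fst a) else 0)"

definition evol :: "'a set \<Rightarrow> ('a \<times> 'a) set \<Rightarrow> (('a \<times> 'a) \<Rightarrow> complex) \<Rightarrow> ('a \<times> 'a) \<Rightarrow> complex" where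
  "evol V A \<phi> = shift A (coin V A \<phi>)"

definition pst :: "'a set \<Rightarrow> ('a \<times> 'a) set \<Rightarrow> (('a \<times> 'a) \<Rightarrow> complex) \<Rightarrow> (('a \<times> 'a) \<Rightarrow> complex) \<Rightarrow> bool" where
  "pst V A \<Phi> \<Psi> \<longleftrightarrow> \<Phi> \<noteq> \<Psi> \<and>
     (\<exists>\<tau>::nat. \<exists>\<gamma>::complex. \<tau> \<ge> 1 \<and> cmod \<gamma> = 1 \<and> (evol V A ^^ \<tau>) \<Phi> = (\<lambda>a. \<gamma> * \<Psi> a))"

text \<open>Circulant graph X(Z_n, S): vertices {0..<n} (representatives of Z_n),
  arcs (x,y) with (y - x) mod n \<in> S.\<close>
definition circ_verts :: "int \<Rightarrow> int set" where
  "circ_verts n = {0..<n}"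

definition circ_arcs :: "int \<Rightarrow> int set \<Rightarrow> (int \<times> int) set" where
  "circ_arcs n S = {(x, y). x \<in> {0..<n} \<and> y \<in> {0..<n} \<and> (y - x) mod n \<in> S}"

definition gconnected :: "'a set \<Rightarrow> ('a \<times> 'a) set \<Rightarrow> bool" where
  "gconnected V A \<longleftrightarrow> (\<forall>x\<in>V. \<forall>y\<in>V. (x, y) \<in> A\<^sup>*)"

end

theory Submission
  imports Defs
begin

text \<open>On a \<open>k\<close>-regular graph the walk maps arc vectors of the form \<open>(u, w) \<mapsto> f w + g u\<close> to
  vectors of the same form, and the vertex amplitudes obey the three-term recurrence of the
  Chebyshev polynomials \<open>T\<^sub>t\<close>: \<open>d U\<^sup>t d\<^sup>* = T\<^sub>t(P)\<close>, where \<open>P\<close> is the adjacency operator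
  divided by \<open>k\<close>. As \<open>d d\<^sup>* = 1\<close>, perfect state transfer from \<open>x\<close> to \<open>y\<close> forces
  \<open>|T\<^sub>\<tau>(P)\<^sub>x\<^sub>y| = 1\<close>.

  If \<open>a + b = l\<close> in \<open>\<int>\<^sub>2\<^sub>l\<close>, the connection set is \<open>{\<plusminus>a, l \<plusminus> a}\<close>, so
  \<open>P = \<onehalf>(P\<^sub>a + P\<^sub>-\<^sub>a) \<cdot> \<onehalf>(1 + P\<^sub>l)\<close> with \<open>P\<^sub>s\<close> the translation by \<open>s\<close>.
  As \<open>\<onehalf>(1 + P\<^sub>l)\<close> is a projection commuting with the translations, \<open>T\<^sub>t(P)\<close> acts as
  \<open>\<onehalf>(P\<^sub>t\<^sub>a + P\<^sub>-\<^sub>t\<^sub>a)\<close> on \<open>l\<close>-periodic functions and as \<open>T\<^sub>t(0) = cos(t\<pi>/2)\<close> on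
  \<open>l\<close>-antiperiodic ones, which gives a closed formula for \<open>T\<^sub>t(P)\<^sub>x\<^sub>y\<close>. Its modulus is
  below 1 for \<open>y \<noteq> x\<close>, except possibly when \<open>y = x + l\<close>, \<open>t \<equiv> 2 (mod 4)\<close> and \<open>l\<close> divides
  \<open>t a\<close>. Connectedness forces \<open>a\<close> to be odd, so for \<open>4 | l\<close> this exception cannot occur.\<close>

section \<open>Quantum walks on regular graphs\<close>

definition arc_state :: "('a \<times> 'a) set \<Rightarrow> ('a \<Rightarrow> complex) \<Rightarrow> ('a \<Rightarrow> complex) \<Rightarrow> 'a \<times> 'a \<Rightarrow> complex" where
  "arc_state A f g = (\<lambda>p. if p \<in> A then f (snd p) + g (fst p) else 0)"

definition adj :: "('a \<times> 'a) set \<Rightarrow> ('a \<Rightarrow> complex) \<Rightarrow> 'a \<Rightarrow> complex" where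
  "adj A g w = (\<Sum>p\<in>{p \<in> A. snd p = w}. g (fst p))"

definition walk_step :: "('a \<times> 'a) set \<Rightarrow> nat \<Rightarrow>
    ('a \<Rightarrow> complex) \<times> ('a \<Rightarrow> complex) \<Rightarrow> ('a \<Rightarrow> complex) \<times> ('a \<Rightarrow> complex)" where
  "walk_step A k = (\<lambda>(f, g). (\<lambda>v. - g v, \<lambda>v. f v + 2 / k * adj A g v))"

text \<open>\<open>walk_value A k (f, g)\<close> is \<open>d \<psi> / sqrt k\<close> for \<open>\<psi> = arc_state A f g\<close>.\<close>

definition walk_value :: "('a \<times> 'a) set \<Rightarrow> nat \<Rightarrow> ('a \<Rightarrow> complex) \<times> ('a \<Rightarrow> complex) \<Rightarrow> 'a \<Rightarrow> complex" where
  "walk_value A k = (\<lambda>(f, g) v. f v + adj A g v / k)"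

text \<open>\<open>cheb A k t e = T\<^sub>t(adj A / k) e\<close> for the Chebyshev polynomials \<open>T\<^sub>t\<close> of the first kind.\<close>

fun cheb :: "('a \<times> 'a) set \<Rightarrow> nat \<Rightarrow> nat \<Rightarrow> ('a \<Rightarrow> complex) \<Rightarrow> 'a \<Rightarrow> complex" where
  "cheb A k 0 e = e"
| "cheb A k (Suc 0) e = (\<lambda>v. adj A e v / k)"
| "cheb A k (Suc (Suc t)) e = (\<lambda>v. 2 * adj A (cheb A k (Suc t) e) v / k - cheb A k t e v)"

lemma adj_add: "adj A (\<lambda>v. f v + g v) = (\<lambda>w. adj A f w + adj A g w)"
  by (simp add: adj_def sum.distrib fun_eq_iff)

lemma adj_diff: "adj A (\<lambda>v. f v - g v) = (\<lambda>w. adj A f w - adj A g w)"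
  by (simp add: adj_def sum_subtractf fun_eq_iff)

lemma adj_minus: "adj A (\<lambda>v. - f v) = (\<lambda>w. - adj A f w)"
  by (simp add: adj_def sum_negf fun_eq_iff)

lemma adj_mult: "adj A (\<lambda>v. c * f v) = (\<lambda>w. c * adj A f w)"
  by (simp add: adj_def sum_distrib_left fun_eq_iff)

lemma adj_divide: "adj A (\<lambda>v. f v / c) = (\<lambda>w. adj A f w / c)"
  by (simp add: adj_def sum_divide_distrib fun_eq_iff)

lemmas adj_linear = adj_add adj_diff adj_minus adj_mult adj_divide

lemma cheb_scale: "cheb A k t (\<lambda>v. c * e v) = (\<lambda>v. c * cheb A k t e v)"
  by (induction t rule: induct_nat_012) (simp_all add: adj_linear algebra_simps)

lemma walk_value_step_step:
  "walk_value A k (walk_step A k (walk_step A k p))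
     = (\<lambda>v. 2 * adj A (walk_value A k (walk_step A k p)) v / k - walk_value A k p v)"
  by (cases p)
     (simp add: walk_step_def walk_value_def adj_linear fun_eq_iff diff_divide_distrib add_divide_distrib)

lemma walk_value_iterate_eq_cheb:
  "walk_value A k ((walk_step A k ^^ t) (e, \<lambda>_. 0)) = cheb A k t e"
proof (induction t rule: induct_nat_012)
  case (ge2 t)
  then show ?case by (simp add: walk_value_step_step)
qed (simp_all add: walk_step_def walk_value_def adj_def)

locale regular_digraph =
  fixes V :: "'a set" and A :: "('a \<times> 'a) set" and k :: nat
  assumes finite_V: "finite V"
    and arcs_subset: "A \<subseteq> V \<times> V"
    and arcs_sym: "(u, w) \<in> A \<Longrightarrow> (w, u) \<in> A"
    and gdeg_eq: "x \<in> V \<Longrightarrow> gdeg A x = k"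
    and k_pos: "0 < k"
begin

lemma finite_A: "finite A"
  using finite_subset[OF arcs_subset] finite_V by blast

lemma bnd_arc: "p \<in> A \<Longrightarrow> bnd A z p = (if z = snd p then 1 / sqrt k else 0)"
  using arcs_subset gdeg_eq by (auto simp: bnd_def)

lemma sum_bnd_arc:
  assumes "p \<in> A" "q \<in> A"
  shows "(\<Sum>z\<in>V. cnj (bnd A z p) * bnd A z q) = (if snd q = snd p then 1 / of_nat k else 0 :: complex)"
proof -
  have "complex_of_real (1 / sqrt k) * complex_of_real (1 / sqrt k) = 1 / of_nat k"
    by (simp flip: of_real_mult)
  then have "cnj (bnd A z p) * bnd A z q = (if z = snd p \<and> snd q = snd p then 1 / of_nat k else 0)" for z
    using assms by (simp add: bnd_arc)
  moreover have "snd p \<in> V"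
    using assms(1) arcs_subset by auto
  ultimately show ?thesis
    using finite_V by (simp add: sum.delta)
qed

lemma coin_arc_state:
  assumes "(u, w) \<in> A"
  shows "coin V A (arc_state A f g) (u, w) = f w + 2 / k * adj A g w - g u"
proof -
  have "(\<Sum>q\<in>A. (\<Sum>z\<in>V. cnj (bnd A z (u, w)) * bnd A z q) * arc_state A f g q)
      = (\<Sum>q\<in>{q \<in> A. snd q = w}. (f w + g (fst q)) / k)"
    using assms finite_A
    by (simp add: sum_bnd_arc arc_state_def sum.inter_filter if_distrib[of "\<lambda>c. c * _"] cong: if_cong)
  also have "\<dots> = (gdeg A w * f w + adj A g w) / k"
    by (simp add: adj_def gdeg_def sum.distrib sum_divide_distrib[symmetric])
  also have "\<dots> = f w + adj A g w / k"
    using assms arcs_subset gdeg_eq k_pos by (auto simp: field_simps)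
  finally show ?thesis
    using assms by (simp add: coin_def arc_state_def algebra_simps)
qed

lemma evol_arc_state: "evol V A (arc_state A f g) = case_prod (arc_state A) (walk_step A k (f, g))"
  by (auto simp: fun_eq_iff evol_def shift_def walk_step_def coin_arc_state arcs_sym)
     (auto simp: arc_state_def)

lemma evol_funpow_arc_state:
  "(evol V A ^^ t) (case_prod (arc_state A) p) = case_prod (arc_state A) ((walk_step A k ^^ t) p)"
  by (induction t) (simp_all add: evol_arc_state split_beta)

lemma vstate_eq_arc_state:
  "vstate A x = arc_state A (\<lambda>v. of_bool (v = x) / of_real (sqrt k)) (\<lambda>_. 0)"
  by (auto simp: fun_eq_iff vstate_def arc_state_def bnd_arc)

lemma walk_value_at_vstate:
  assumes "y \<in> V" and "case_prod (arc_state A) p = (\<lambda>q. \<gamma> * vstate A y q)"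
  shows "walk_value A k p y = \<gamma> / sqrt k"
proof -
  obtain f g where p: "p = (f, g)" by fastforce
  have "f y + g (fst q) = \<gamma> / sqrt k" if "q \<in> {q \<in> A. snd q = y}" for q
    using that fun_cong[OF assms(2), of q] by (auto simp: p arc_state_def vstate_eq_arc_state)
  then have "(\<Sum>q\<in>{q \<in> A. snd q = y}. f y + g (fst q)) = k * (\<gamma> / sqrt k)"
    using gdeg_eq[OF assms(1)] by (simp add: gdeg_def)
  then show ?thesis
    using k_pos gdeg_eq[OF assms(1)] by (simp add: p walk_value_def adj_def gdeg_def sum.distrib field_simps)
qed

lemma pst_vstate_imp_norm_cheb_eq_1:
  assumes "y \<in> V" and "pst V A (vstate A x) (vstate A y)"
  shows "x \<noteq> y" and "\<exists>\<tau>. cmod (cheb A k \<tau> (\<lambda>v. of_bool (v = x)) y) = 1"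
proof -
  show "x \<noteq> y"
    using assms(2) by (auto simp: pst_def)
  define \<delta> where "\<delta> = (\<lambda>v. of_bool (v = x) / complex_of_real (sqrt k))"
  from assms(2) obtain \<tau> \<gamma> where "cmod \<gamma> = 1" and
    "(evol V A ^^ \<tau>) (vstate A x) = (\<lambda>q. \<gamma> * vstate A y q)"
    by (auto simp: pst_def)
  moreover have
    "(evol V A ^^ \<tau>) (vstate A x) = case_prod (arc_state A) ((walk_step A k ^^ \<tau>) (\<delta>, \<lambda>_. 0))"
    using evol_funpow_arc_state[of \<tau> "(\<delta>, \<lambda>_. 0)"] by (simp add: \<delta>_def vstate_eq_arc_state)
  ultimately have "walk_value A k ((walk_step A k ^^ \<tau>) (\<delta>, \<lambda>_. 0)) y = \<gamma> / sqrt k"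
    using walk_value_at_vstate[OF assms(1)] by simp
  then have "cheb A k \<tau> (\<lambda>v. of_bool (v = x)) y = \<gamma>"
    using k_pos cheb_scale[of A k \<tau> "inverse (sqrt k)" "\<lambda>v. of_bool (v = x)"]
    by (simp add: \<delta>_def walk_value_iterate_eq_cheb divide_inverse mult.commute[of _ "inverse _"])
  then show "\<exists>\<tau>. cmod (cheb A k \<tau> (\<lambda>v. of_bool (v = x)) y) = 1"
    using \<open>cmod \<gamma> = 1\<close> by blast
qed

end

section \<open>Circulant graphs\<close>

lemma circ_arcs_into:
  assumes "0 < n" "S \<subseteq> {0..<n}" "w \<in> circ_verts n"
  shows "{p \<in> circ_arcs n S. snd p = w} = (\<lambda>s. ((w - s) mod n, w)) ` S"
proof (intro set_eqI iffI)
  fix p assume "p \<in> {p \<in> circ_arcs n S. snd p = w}"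
  then obtain u where p: "p = (u, w)" "u \<in> {0..<n}" "(w - u) mod n \<in> S"
    by (auto simp: circ_arcs_def)
  then have "(w - (w - u) mod n) mod n = u"
    by (simp add: mod_diff_right_eq)
  then show "p \<in> (\<lambda>s. ((w - s) mod n, w)) ` S"
    using p by force
next
  fix p assume "p \<in> (\<lambda>s. ((w - s) mod n, w)) ` S"
  then obtain s where s: "s \<in> S" "p = ((w - s) mod n, w)" by auto
  then have "s \<in> {0..<n}"
    using assms(2) by auto
  then have "(w - (w - s) mod n) mod n = s"
    by (simp add: mod_diff_right_eq)
  then show "p \<in> {p \<in> circ_arcs n S. snd p = w}"
    using s assms(1,3) by (simp add: circ_arcs_def circ_verts_def)
qed

lemma inj_on_circ_arcs_into:
  fixes n w :: int
  assumes "S \<subseteq> {0..<n}"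
  shows "inj_on (\<lambda>s. ((w - s) mod n, w)) S"
proof (rule inj_onI)
  have cancel: "(w - (w - s) mod n) mod n = s" if "s \<in> S" for s
    using that assms by (auto simp: mod_diff_right_eq)
  fix s s' assume "s \<in> S" "s' \<in> S" "((w - s) mod n, w) = ((w - s') mod n, w)"
  then show "s = s'"
    using cancel by (metis prod.inject)
qed

lemma gdeg_circ_arcs:
  assumes "0 < n" "S \<subseteq> {0..<n}" "w \<in> circ_verts n"
  shows "gdeg (circ_arcs n S) w = card S"
  using card_image[OF inj_on_circ_arcs_into[OF assms(2)]] circ_arcs_into[OF assms]
  by (simp add: gdeg_def)

lemma adj_circ_arcs:
  assumes "0 < n" "S \<subseteq> {0..<n}" "w \<in> circ_verts n"
  shows "adj (circ_arcs n S) g w = (\<Sum>s\<in>S. g ((w - s) mod n))"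
proof -
  have "adj (circ_arcs n S) g w = (\<Sum>p\<in>(\<lambda>s. ((w - s) mod n, w)) ` S. g (fst p))"
    by (simp add: adj_def circ_arcs_into[OF assms])
  also have "\<dots> = (\<Sum>s\<in>S. g ((w - s) mod n))"
    by (simp add: sum.reindex[OF inj_on_circ_arcs_into[OF assms(2)]])
  finally show ?thesis .
qed

lemma regular_digraph_circ:
  assumes "0 < n" "S \<subseteq> {0..<n}" "S \<noteq> {}" "\<And>s. s \<in> S \<Longrightarrow> (- s) mod n \<in> S"
  shows "regular_digraph (circ_verts n) (circ_arcs n S) (card S)"
proof
  show "finite (circ_verts n)"
    by (simp add: circ_verts_def)
  show "circ_arcs n S \<subseteq> circ_verts n \<times> circ_verts n"
    by (auto simp: circ_arcs_def circ_verts_def)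
  show "(w, u) \<in> circ_arcs n S" if "(u, w) \<in> circ_arcs n S" for u w
    using that assms(4)[of "(w - u) mod n"] by (simp add: circ_arcs_def mod_minus_eq)
  show "gdeg (circ_arcs n S) x = card S" if "x \<in> circ_verts n" for x
    using assms(1,2) that by (rule gdeg_circ_arcs)
  show "0 < card S"
    using assms(3) finite_subset[OF assms(2)] by (simp add: card_gt_0_iff)
qed

lemma gconnected_circ_obtains_odd_step:
  assumes "gconnected (circ_verts n) (circ_arcs n S)" "even n" "1 < n"
  obtains s where "s \<in> S" "odd s"
proof -
  have "even w" if "(0, w) \<in> (circ_arcs n S)\<^sup>*" "\<forall>s\<in>S. even s" for w
    using that
  proof (induction rule: rtrancl_induct)
    case (step u w)
    then have "even ((w - u) mod n)"
      by (auto simp: circ_arcs_def)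
    then show ?case
      using step \<open>even n\<close> dvd_mod_iff[of 2 n "w - u"] by simp
  qed simp
  moreover have "(0, 1) \<in> (circ_arcs n S)\<^sup>*"
    using assms(1,3) by (simp add: gconnected_def circ_verts_def)
  ultimately have "\<not> (\<forall>s\<in>S. even s)"
    by fastforce
  then show ?thesis
    using that by blast
qed

section \<open>The circulant graph with connection set \<open>{\<plusminus>a, l \<plusminus> a}\<close> in \<open>\<int>\<^sub>2\<^sub>l\<close>\<close>

text \<open>\<open>cheb_at_0 t = T\<^sub>t(0) = cos(t\<pi>/2)\<close>. In \<open>cheb_antipodal l a t m = T\<^sub>t(P)\<^sub>x\<^sub>y\<close>
  (with \<open>m = y - x\<close>), \<open>cos_part\<close> comes from the \<open>l\<close>-periodic part \<open>\<onehalf>(e\<^sub>0 + e\<^sub>l)\<close> of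
  \<open>e\<^sub>0\<close> and \<open>sign_part\<close> from its \<open>l\<close>-antiperiodic part \<open>\<onehalf>(e\<^sub>0 - e\<^sub>l)\<close>.\<close>

definition cheb_at_0 :: "nat \<Rightarrow> complex" where
  "cheb_at_0 t = (if t mod 4 = 0 then 1 else if t mod 4 = 2 then -1 else 0)"

definition cos_part :: "int \<Rightarrow> int \<Rightarrow> nat \<Rightarrow> int \<Rightarrow> complex" where
  "cos_part l a t m = (of_bool (l dvd m - int t * a) + of_bool (l dvd m + int t * a)) / 4"

definition sign_part :: "int \<Rightarrow> int \<Rightarrow> complex" where
  "sign_part l m = of_bool (2 * l dvd m) - of_bool (2 * l dvd m - l)"

definition cheb_antipodal :: "int \<Rightarrow> int \<Rightarrow> nat \<Rightarrow> int \<Rightarrow> complex" where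
  "cheb_antipodal l a t m = cos_part l a t m + cheb_at_0 t * sign_part l m / 2"

definition antipodal_avg :: "int \<Rightarrow> int \<Rightarrow> (int \<Rightarrow> complex) \<Rightarrow> int \<Rightarrow> complex" where
  "antipodal_avg l a g m = (g (m - a) + g (m + a) + g (m + l - a) + g (m + l + a)) / 4"

lemma dvd_iff_dvd_if_dvd_diff: "(d :: int) dvd p - q \<Longrightarrow> d dvd p \<longleftrightarrow> d dvd q"
  using dvd_add_right_iff[of d "p - q" q] by simp

lemma of_bool_dvd_split:
  fixes l m :: int
  assumes "l \<noteq> 0"
  shows "of_bool (l dvd m) = (of_bool (2 * l dvd m) + of_bool (2 * l dvd m - l) :: complex)"
proof -
  have "\<not> (2 * l dvd m \<and> 2 * l dvd m - l)"
    using assms dvd_diff[of "2 * l" m "m - l"] by (auto dest: zdvd_imp_le)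
  moreover have "l dvd m \<longleftrightarrow> 2 * l dvd m \<or> 2 * l dvd m - l"
  proof
    assume "l dvd m"
    then obtain j where "m = l * j" by blast
    then show "2 * l dvd m \<or> 2 * l dvd m - l"
      by (cases "even j") (auto elim!: evenE oddE simp: algebra_simps)
  next
    assume "2 * l dvd m \<or> 2 * l dvd m - l"
    then have "l dvd m \<or> l dvd m - l"
      using dvd_mult_right by blast
    then show "l dvd m"
      using dvd_iff_dvd_if_dvd_diff[of l m "m - l"] by auto
  qed
  ultimately show ?thesis
    by auto
qed

lemma cos_part_cong: "l dvd p - q \<Longrightarrow> cos_part l a t p = cos_part l a t q"
  using dvd_iff_dvd_if_dvd_diff[of l "p - int t * a" "q - int t * a"]
    dvd_iff_dvd_if_dvd_diff[of l "p + int t * a" "q + int t * a"]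
  by (simp add: cos_part_def)

lemma sign_part_cong: "2 * l dvd p - q \<Longrightarrow> sign_part l p = sign_part l q"
  using dvd_iff_dvd_if_dvd_diff[of "2 * l" p q] dvd_iff_dvd_if_dvd_diff[of "2 * l" "p - l" "q - l"]
  by (simp add: sign_part_def)

lemma sign_part_add_self: "sign_part l (m + l) = - sign_part l m"
  using dvd_iff_dvd_if_dvd_diff[of "2 * l" "m + l" "m - l"] by (simp add: sign_part_def)

lemma cheb_antipodal_cong: "2 * l dvd p - q \<Longrightarrow> cheb_antipodal l a t p = cheb_antipodal l a t q"
  using cos_part_cong[of l p q] sign_part_cong[of l p q] dvd_mult_right[of 2 l]
  by (simp add: cheb_antipodal_def)

lemma cheb_antipodal_add_self:
  "cheb_antipodal l a t (m + l) = cos_part l a t m - cheb_at_0 t * sign_part l m / 2"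
  using cos_part_cong[of l "m + l" m] by (simp add: cheb_antipodal_def sign_part_add_self)

lemma cos_part_Suc_Suc:
  "cos_part l a (Suc (Suc t)) m = cos_part l a (Suc t) (m - a) + cos_part l a (Suc t) (m + a) - cos_part l a t m"
proof -
  have "m - a - int (Suc t) * a = m - int (Suc (Suc t)) * a" "m - a + int (Suc t) * a = m + int t * a"
    "m + a - int (Suc t) * a = m - int t * a" "m + a + int (Suc t) * a = m + int (Suc (Suc t)) * a"
    by (simp_all add: algebra_simps)
  then show ?thesis
    by (simp add: cos_part_def field_simps)
qed

lemma cheb_at_0_Suc_Suc: "cheb_at_0 (Suc (Suc t)) = - cheb_at_0 t"
proof -
  have "t mod 4 = 0 \<and> Suc (Suc t) mod 4 = 2 \<or> t mod 4 = 1 \<and> Suc (Suc t) mod 4 = 3 \<or>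
      t mod 4 = 2 \<and> Suc (Suc t) mod 4 = 0 \<or> t mod 4 = 3 \<and> Suc (Suc t) mod 4 = 1"
    by presburger
  then show ?thesis
    unfolding cheb_at_0_def by auto
qed

lemma cheb_antipodal_Suc_Suc:
  "cheb_antipodal l a (Suc (Suc t)) m
     = 2 * antipodal_avg l a (cheb_antipodal l a (Suc t)) m - cheb_antipodal l a t m"
proof -
  have "m + l - a = (m - a) + l" "m + l + a = (m + a) + l"
    by simp_all
  then have "2 * antipodal_avg l a (cheb_antipodal l a (Suc t)) m
      = cos_part l a (Suc t) (m - a) + cos_part l a (Suc t) (m + a)"
    unfolding antipodal_avg_def by (simp only: cheb_antipodal_add_self) (simp add: cheb_antipodal_def)
  then show ?thesis
    by (simp add: cheb_antipodal_def cos_part_Suc_Suc cheb_at_0_Suc_Suc)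
qed

lemma cheb_antipodal_0: "l \<noteq> 0 \<Longrightarrow> cheb_antipodal l a 0 m = of_bool (2 * l dvd m)"
  using of_bool_dvd_split[of l m]
  by (simp add: cheb_antipodal_def cos_part_def sign_part_def cheb_at_0_def field_simps)

lemma cheb_antipodal_1:
  assumes "l \<noteq> 0"
  shows "cheb_antipodal l a (Suc 0) m = antipodal_avg l a (\<lambda>m. of_bool (2 * l dvd m)) m"
proof -
  have "of_bool (2 * l dvd m - a - l) = (of_bool (2 * l dvd m + l - a) :: complex)"
    "of_bool (2 * l dvd m + a - l) = (of_bool (2 * l dvd m + l + a) :: complex)"
    using dvd_iff_dvd_if_dvd_diff[of "2 * l" "m - a - l" "m + l - a"]
      dvd_iff_dvd_if_dvd_diff[of "2 * l" "m + a - l" "m + l + a"]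
    by simp_all
  then show ?thesis
    using of_bool_dvd_split[OF assms, of "m - a"] of_bool_dvd_split[OF assms, of "m + a"]
    by (simp add: cheb_antipodal_def cos_part_def cheb_at_0_def antipodal_avg_def add_divide_distrib)
qed

lemma not_dvd_mult_odd_if_mod_4_eq_2:
  fixes l a :: int
  assumes "odd a" "4 dvd l" "t mod 4 = 2"
  shows "\<not> l dvd int t * a"
proof
  define c where "c = (2 * int (t div 4) + 1) * a"
  have "int t = 2 * (2 * int (t div 4) + 1)"
    using assms(3) by presburger
  then have "int t * a = 2 * c"
    by (simp add: c_def)
  moreover assume "l dvd int t * a"
  ultimately have "4 dvd 2 * c"
    using assms(2) by (metis dvd_trans)
  moreover have "odd c"
    using assms(1) by (simp add: c_def)
  ultimately show False
    by presburger
qed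

lemma norm_cos_part_le: "cmod (cos_part l a t m) \<le> 1 / 2"
proof -
  have "cmod (of_bool (l dvd m - int t * a) + of_bool (l dvd m + int t * a) :: complex) \<le> 2"
    by (rule order_trans[OF norm_triangle_ineq]) simp
  then show ?thesis
    by (simp add: cos_part_def norm_divide)
qed

lemma norm_cheb_antipodal_less_1:
  assumes "odd a" "4 dvd l" "\<not> 2 * l dvd m"
  shows "cmod (cheb_antipodal l a t m) < 1"
proof (cases "2 * l dvd m - l")
  case False
  then show ?thesis
    using assms(3) norm_cos_part_le[of l a t m] by (simp add: cheb_antipodal_def sign_part_def)
next
  case True
  then have "l dvd m"
    using dvd_iff_dvd_if_dvd_diff[of l m "m - l"] dvd_mult_right[of 2 l "m - l"] by simp
  then have "cos_part l a t m = of_bool (l dvd int t * a) / 2"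
    using dvd_iff_dvd_if_dvd_diff[of l "m - int t * a" "- (int t * a)"]
      dvd_iff_dvd_if_dvd_diff[of l "m + int t * a" "int t * a"]
    by (simp add: cos_part_def)
  then have val: "cheb_antipodal l a t m = (of_bool (l dvd int t * a) - cheb_at_0 t) / 2"
    using True assms(3) by (simp add: cheb_antipodal_def sign_part_def diff_divide_distrib)
  show ?thesis
  proof (cases "t mod 4 = 2")
    case True
    then show ?thesis
      using not_dvd_mult_odd_if_mod_4_eq_2[OF assms(1,2) True] by (simp add: val cheb_at_0_def)
  next
    case False
    then show ?thesis
      by (cases "l dvd int t * a"; cases "t mod 4 = 0") (simp_all add: val cheb_at_0_def norm_divide)
  qed
qed


lemma circ_verts_eq_iff_dvd:
  assumes "v \<in> circ_verts n" "x \<in> circ_verts n"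
  shows "v = x \<longleftrightarrow> n dvd v - x"
proof
  assume "n dvd v - x"
  moreover have "\<bar>v - x\<bar> < \<bar>n\<bar>"
    using assms by (auto simp: circ_verts_def)
  ultimately show "v = x"
    using dvd_imp_le_int[of "v - x" n] by fastforce
qed simp

lemma periodic_mod_diff:
  fixes n w c :: int
  assumes "\<And>p q. n dvd p - q \<Longrightarrow> g p = g q"
  shows "g ((w - c mod n) mod n) = g (w - c)"
proof (rule assms)
  have "(w - c mod n) mod n = (w - c) mod n"
    by (rule mod_diff_right_eq)
  then show "n dvd (w - c mod n) mod n - (w - c)"
    by (simp add: mod_eq_dvd_iff[symmetric])
qed

lemma sum_four_distinct:
  assumes "card {p, q, r, s} = 4"
  shows "sum f {p, q, r, s} = f p + f q + f r + f s"
proof -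
  have "distinct [p, q, r, s]"
    using assms by (intro card_distinct) simp
  then show ?thesis
    by (simp add: add.assoc)
qed

lemma sum_antipodal_set:
  fixes l a :: int
  assumes "card {a mod (2 * l), (- a) mod (2 * l), (l - a) mod (2 * l), (a - l) mod (2 * l)} = 4"
    and periodic: "\<And>p q. 2 * l dvd p - q \<Longrightarrow> g p = g q"
  shows "(\<Sum>s\<in>{a mod (2 * l), (- a) mod (2 * l), (l - a) mod (2 * l), (a - l) mod (2 * l)}.
      g ((w - s) mod (2 * l))) = 4 * antipodal_avg l a g w"
proof -
  have "g (w - (l - a)) = g (w + l + a)" "g (w - (a - l)) = g (w + l - a)"
    by (rule periodic; simp add: algebra_simps)+
  moreover note periodic_mod_diff[of "2 * l" g, OF periodic]
  ultimately show ?thesis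
    by (simp only: sum_four_distinct[OF assms(1)]) (simp add: antipodal_avg_def)
qed

lemma adj_circ_antipodal:
  fixes l a x :: int
  defines "n \<equiv> 2 * l"
  defines "S \<equiv> {a mod n, (- a) mod n, (l - a) mod n, (a - l) mod n}"
  assumes "0 < l" "card S = 4" "w \<in> circ_verts n"
    and agree: "\<And>v. v \<in> circ_verts n \<Longrightarrow> f v = g (v - x)"
    and periodic: "\<And>p q. n dvd p - q \<Longrightarrow> g p = g q"
  shows "adj (circ_arcs n S) f w = 4 * antipodal_avg l a g (w - x)"
proof -
  have "0 < n" "S \<subseteq> {0..<n}"
    using \<open>0 < l\<close> by (auto simp: n_def S_def)
  then have "adj (circ_arcs n S) f w = (\<Sum>s\<in>S. g ((w - s) mod n - x))"
    using assms(5) by (simp add: adj_circ_arcs agree circ_verts_def)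
  also have "\<dots> = 4 * antipodal_avg l a (\<lambda>v. g (v - x)) w"
    using assms(4) periodic unfolding S_def n_def
    by (intro sum_antipodal_set) (simp_all add: algebra_simps)
  finally show ?thesis
    by (simp add: antipodal_avg_def algebra_simps)
qed

lemma cheb_circ_antipodal:
  fixes l a x :: int
  defines "n \<equiv> 2 * l"
  defines "S \<equiv> {a mod n, (- a) mod n, (l - a) mod n, (a - l) mod n}"
  assumes "0 < l" "card S = 4" "x \<in> circ_verts n" "w \<in> circ_verts n"
  shows "cheb (circ_arcs n S) 4 t (\<lambda>v. of_bool (v = x)) w = cheb_antipodal l a t (w - x)"
  using assms(6)
proof (induction t arbitrary: w rule: induct_nat_012)
  case 0
  then show ?case
    using assms(3) circ_verts_eq_iff_dvd[OF 0 assms(5)] by (simp add: cheb_antipodal_0 n_def)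
next
  case 1
  have "adj (circ_arcs n S) (\<lambda>v. of_bool (v = x)) w
      = 4 * antipodal_avg l a (\<lambda>m. of_bool (n dvd m)) (w - x)"
    using assms(3-5) 1 unfolding n_def S_def
  proof (intro adj_circ_antipodal)
    show "of_bool (v = x) = of_bool (2 * l dvd v - x)" if "v \<in> circ_verts (2 * l)" for v
      using circ_verts_eq_iff_dvd[OF that] assms(5) by (simp add: n_def)
    show "of_bool (2 * l dvd p) = of_bool (2 * l dvd q)" if "2 * l dvd p - q" for p q
      using dvd_iff_dvd_if_dvd_diff[OF that] by simp
  qed
  then show ?case
    using assms(3) by (simp add: cheb_antipodal_1 n_def)
next
  case (ge2 t)
  have "adj (circ_arcs n S) (cheb (circ_arcs n S) 4 (Suc t) (\<lambda>v. of_bool (v = x))) w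
      = 4 * antipodal_avg l a (cheb_antipodal l a (Suc t)) (w - x)"
    using assms(3,4) ge2 unfolding n_def S_def
    by (intro adj_circ_antipodal) (auto intro: cheb_antipodal_cong)
  then show ?case
    using ge2 by (simp add: cheb_antipodal_Suc_Suc)
qed

lemma gconnected_circ_antipodal_imp_odd:
  fixes l a :: int
  defines "n \<equiv> 2 * l"
  assumes "gconnected (circ_verts n) (circ_arcs n {a mod n, (- a) mod n, (l - a) mod n, (a - l) mod n})"
    and "0 < l" "even l"
  shows "odd a"
proof -
  obtain c where "c \<in> {a, - a, l - a, a - l}" "odd (c mod n)"
    using gconnected_circ_obtains_odd_step[OF assms(2)] \<open>0 < l\<close> by (auto simp: n_def)
  then show ?thesis
    using \<open>even l\<close> dvd_mod_iff[of 2 n c] by (auto simp: n_def)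
qed

lemma no_pst_circ_antipodal:
  fixes l a x y :: int
  defines "n \<equiv> 2 * l"
  defines "S \<equiv> {a mod n, (- a) mod n, (l - a) mod n, (a - l) mod n}"
  assumes "0 < l" "card S = 4" "odd a" "4 dvd l" "x \<in> circ_verts n" "y \<in> circ_verts n"
  shows "\<not> pst (circ_verts n) (circ_arcs n S) (vstate (circ_arcs n S) x) (vstate (circ_arcs n S) y)"
proof
  have "0 < n" "S \<subseteq> {0..<n}" "S \<noteq> {}" and S_sym: "\<And>s. s \<in> S \<Longrightarrow> (- s) mod n \<in> S"
    using \<open>0 < l\<close> by (auto simp: n_def S_def mod_minus_eq)
  then interpret regular_digraph "circ_verts n" "circ_arcs n S" 4
    using regular_digraph_circ[OF \<open>0 < n\<close> \<open>S \<subseteq> {0..<n}\<close> \<open>S \<noteq> {}\<close> S_sym] \<open>card S = 4\<close>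
    by simp
  assume "pst (circ_verts n) (circ_arcs n S) (vstate (circ_arcs n S) x) (vstate (circ_arcs n S) y)"
  then obtain \<tau> where norm_eq_1: "cmod (cheb (circ_arcs n S) 4 \<tau> (\<lambda>v. of_bool (v = x)) y) = 1"
    and "x \<noteq> y"
    using pst_vstate_imp_norm_cheb_eq_1[OF \<open>y \<in> circ_verts n\<close>] by blast
  have "\<not> 2 * l dvd y - x"
    using \<open>x \<noteq> y\<close> circ_verts_eq_iff_dvd[OF assms(8,7)] by (simp add: n_def)
  moreover have "cheb (circ_arcs n S) 4 \<tau> (\<lambda>v. of_bool (v = x)) y = cheb_antipodal l a \<tau> (y - x)"
    using cheb_circ_antipodal[of l a x y \<tau>, folded n_def, folded S_def] assms(3,4,7,8) by blast
  ultimately have "cmod (cheb (circ_arcs n S) 4 \<tau> (\<lambda>v. of_bool (v = x)) y) < 1"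
    using norm_cheb_antipodal_less_1[OF \<open>odd a\<close> \<open>4 dvd l\<close>] by simp
  with norm_eq_1 show False
    by simp
qed

theorem lemma8p2:
  fixes l a b :: int
  defines "n \<equiv> 2 * l"
  defines "S \<equiv> {a mod n, (- a) mod n, b mod n, (- b) mod n}"
  assumes "l \<ge> 2"
    and "0 \<notin> S"
    and "\<forall>x\<in>circ_verts n. gdeg (circ_arcs n S) x = 4"
    and "gconnected (circ_verts n) (circ_arcs n S)"
    and "(a + b) mod n = l mod n"
    and "l mod 4 = 0"
  shows "\<forall>x\<in>circ_verts n. \<forall>y\<in>circ_verts n.
           \<not> pst (circ_verts n) (circ_arcs n S) (vstate (circ_arcs n S) x) (vstate (circ_arcs n S) y)"
proof (intro ballI)
  fix x y
  assume "x \<in> circ_verts n" "y \<in> circ_verts n"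
  have "0 < n" "0 \<in> circ_verts n"
    using \<open>l \<ge> 2\<close> by (simp_all add: n_def circ_verts_def)
  have "b mod n = (l - a) mod n"
    using \<open>(a + b) mod n = l mod n\<close> by (metis add_diff_cancel_left' mod_diff_left_eq)
  moreover from this have "(- b) mod n = (a - l) mod n"
    by (metis mod_minus_eq minus_diff_eq)
  ultimately have S_eq: "S = {a mod n, (- a) mod n, (l - a) mod n, (a - l) mod n}"
    by (simp add: S_def)
  have "S \<subseteq> {0..<n}"
    using \<open>0 < n\<close> by (auto simp: S_def)
  then have "card S = 4"
    using assms(5) \<open>0 \<in> circ_verts n\<close> gdeg_circ_arcs[OF \<open>0 < n\<close>] by auto
  moreover have "4 dvd l" "even l"
    using \<open>l mod 4 = 0\<close> by presburger+
  moreover have "odd a"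
    using assms(6) unfolding S_eq n_def
    by (rule gconnected_circ_antipodal_imp_odd) (use \<open>l \<ge> 2\<close> \<open>even l\<close> in auto)
  ultimately show "\<not> pst (circ_verts n) (circ_arcs n S) (vstate (circ_arcs n S) x) (vstate (circ_arcs n S) y)"
    using no_pst_circ_antipodal \<open>l \<ge> 2\<close> \<open>x \<in> circ_verts n\<close> \<open>y \<in> circ_verts n\<close>
    unfolding S_eq n_def by simp
qed

end
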